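(* Let either $n\ge 3$ and $k\ge 4$, or $n\ge 4$ and $k=3$. Let $\alpha=a_1\cdots a_n\in\mathbf{A}_k(n)\setminus\{r_{n,k}\}$ be such that $\mathrm{LastNonMax}(\alpha)\notin\mathbf{A}_k(n)$ and $\mathrm{LastSymbol}(\alpha)\notin\mathbf{A}_k(n)$. If $k\ge 4$, then $\mathrm{FirstNonMin}(\alpha)\in\mathbf{A}_k(n)$. If $k=3$ and $\mathrm{FirstNonMin}(\alpha)\notin\mathbf{A}_3(n)$, then $\alpha=0\gamma 012$ for some palindrome $\gamma$, and $\mathrm{SecondLastNonMax}(\alpha)\in\mathbf{A}_3(n)$.
   Context: Let $\Sigma=\{0,1,\dots,k-1\}$. Strings are compared lexicographically ($\alpha<\beta$ if $\alpha$ is a proper prefix of $\beta$, or $\alpha$ has the smaller symbol at the first index where they differ). For $\alpha=a_1\cdots a_n$, $\alpha^R=a_n\cdots a_1$; $\alpha$ is a palindrome if $\alpha=\alpha^R$; $[\alpha]$ is the set of rotations of $\alpha$. $\alpha$ is a necklace if it is the lexicographically smallest element of $[\alpha]$; a bracelet if it is the lexicographically smallest element of $[\alpha]\cup[\alpha^R]$. A necklace $\alpha$ is symmetric if $\alpha^R\in[\alpha]$, asymmetric otherwise. $\mathbf{A}_k(n)$ is the set of asymmetric bracelets of length $n$ over $\Sigma$. $r_{n,k}=0^{n-2}(k-2)(k-1)$. Operations on $\alpha=a_1\cdots a_n$: $\mathrm{LastNonMax}(\alpha)=a_1\cdots a_{j-1}(a_j+1)(k-1)^{n-j}$, where $j$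 is the index of the last symbol different from $k-1$; $\mathrm{LastSymbol}(\alpha)$ is the necklace (smallest rotation) of $a_1\cdots a_{n-1}((a_n+1)\bmod k)$; $\mathrm{FirstNonMin}(\alpha)=0^{i-1}(a_i-1)a_{i+1}\cdots a_n$, where $i$ is the index of the first nonzero symbol; $\mathrm{SecondLastNonMax}(\alpha)=a_1\cdots a_{\ell-1}(a_\ell+1)a_{\ell+1}\cdots a_n$, where $\ell$ is the index of the second-last symbol different from $k-1$. *)

theory Defs
  imports Main
begin

text \<open>Strings over \<Sigma> = {0,...,k-1} are lists of naturals with all entries < k.
  Positions below are 0-based (the paper uses 1-based indices).\<close>

fun lex_less :: "nat list \<Rightarrow> nat list \<Rightarrow> bool" where
  "lex_less [] ys = (ys \<noteq> [])"
| "lex_less (x # xs) [] = False"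
| "lex_less (x # xs) (y # ys) = (x < y \<or> (x = y \<and> lex_less xs ys))"

definition lex_le :: "nat list \<Rightarrow> nat list \<Rightarrow> bool" where
  "lex_le xs ys \<longleftrightarrow> xs = ys \<or> lex_less xs ys"

definition rots :: "nat list \<Rightarrow> nat list set" where
  "rots xs = {rotate i xs | i. i < length xs}"

definition is_necklace :: "nat list \<Rightarrow> bool" where
  "is_necklace xs \<longleftrightarrow> (\<forall>ys \<in> rots xs. lex_le xs ys)"

definition is_bracelet :: "nat list \<Rightarrow> bool" where
  "is_bracelet xs \<longleftrightarrow> (\<forall>ys \<in> rots xs \<union> rots (rev xs). lex_le xs ys)"

definition is_palindrome :: "nat list \<Rightarrow> bool" where
  "is_palindrome xs \<longleftrightarrow> xs = rev xs"

definition necklace_of :: "nat list \<Rightarrow> nat list" where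
  "necklace_of xs = (THE ys. ys \<in> rots xs \<and> (\<forall>zs \<in> rots xs. lex_le ys zs))"

definition asym_bracelets :: "nat \<Rightarrow> nat \<Rightarrow> nat list set" where
  "asym_bracelets k n = {xs. length xs = n \<and> set xs \<subseteq> {0..<k} \<and> is_bracelet xs
      \<and> is_necklace xs \<and> rev xs \<notin> rots xs}"

definition r_str :: "nat \<Rightarrow> nat \<Rightarrow> nat list" where
  "r_str n k = replicate (n - 2) 0 @ [k - 2, k - 1]"

definition last_nonmax_idx :: "nat \<Rightarrow> nat list \<Rightarrow> nat" where
  "last_nonmax_idx k xs = Max {i. i < length xs \<and> xs ! i \<noteq> k - 1}"

definition LastNonMax :: "nat \<Rightarrow> nat list \<Rightarrow> nat list" where
  "LastNonMax k xs = (let j = last_nonmax_idx k xs in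
     take j xs @ [xs ! j + 1] @ replicate (length xs - j - 1) (k - 1))"

definition LastSymbol :: "nat \<Rightarrow> nat list \<Rightarrow> nat list" where
  "LastSymbol k xs = necklace_of (butlast xs @ [(last xs + 1) mod k])"

definition FirstNonMin :: "nat list \<Rightarrow> nat list" where
  "FirstNonMin xs = (let i = Min {i. i < length xs \<and> xs ! i \<noteq> 0} in
     take i xs @ [xs ! i - 1] @ drop (i + 1) xs)"

definition SecondLastNonMax :: "nat \<Rightarrow> nat list \<Rightarrow> nat list" where
  "SecondLastNonMax k xs = (let l = Max ({i. i < length xs \<and> xs ! i \<noteq> k - 1}
        - {last_nonmax_idx k xs}) in xs[l := xs ! l + 1])"

end

theory Submission
  imports Defs
begin

text \<open>
  Each operation changes a single symbol of \<open>\<alpha>\<close> (LastSymbol up to rotation), and the result is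
  compared with its rotations and reversed rotations. Incrementing a symbol is harmless against
  every rotation that moves it to an earlier position, because \<open>\<alpha>\<close> was already at most that
  rotation before the changed position; only a few rotations need separate treatment.
  So if LastNonMax fails, \<open>\<alpha>\<close> ends in \<open>k - 1\<close>. If FirstNonMin fails too, \<open>\<alpha>\<close> begins with
  \<open>0\<^sup>i1\<close>, \<open>i > 0\<close>. Were the second-last symbol at least 2, LastSymbol would be
  \<open>0\<^sup>i\<^sup>+\<^sup>11\<dots>\<close>, whose leading run of zeros is longer than any other, hence an asymmetric bracelet.
  So the second-last symbol is at most 1, and incrementing it (LastNonMax) fails only if the first
  \<open>n - 2\<close> symbols form a palindrome and the new symbol is \<open>k - 1\<close>. This forces \<open>k = 3\<close> and
  \<open>\<alpha> = 0\<gamma>012\<close>, and for \<open>\<alpha> \<noteq> r\<^sub>n\<^sub>,\<^sub>3\<close> the word \<open>0\<gamma>112\<close> is checked directly.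
\<close>

lemma lex_less_iff_first_difference:
  "length xs = length ys \<Longrightarrow>
   lex_less xs ys \<longleftrightarrow> (\<exists>d<length xs. (\<forall>r<d. xs!r = ys!r) \<and> xs!d < ys!d)"
proof (induction xs arbitrary: ys)
  case Nil then show ?case by simp
next
  case (Cons x xs)
  then obtain y ys' where "ys = y # ys'" by (cases ys) auto
  with Cons show ?case by (auto simp: Ex_less_Suc2 All_less_Suc2)
qed

lemma lex_lessI:
  "length xs = length ys \<Longrightarrow> d < length xs \<Longrightarrow> (\<And>r. r < d \<Longrightarrow> xs!r = ys!r) \<Longrightarrow> xs!d < ys!d
   \<Longrightarrow> lex_less xs ys"
  using lex_less_iff_first_difference by blast

lemma lex_lessE:
  assumes "lex_less xs ys" "length xs = length ys"
  obtains d where "d < length xs" "\<And>r. r < d \<Longrightarrow> xs!r = ys!r" "xs!d < ys!d"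
  using assms lex_less_iff_first_difference by blast

lemma lex_less_asym:
  assumes "lex_less xs ys" "length xs = length ys"
  shows "\<not> lex_less ys xs"
proof
  assume "lex_less ys xs"
  obtain d where d: "d < length xs" "\<And>r. r < d \<Longrightarrow> xs!r = ys!r" "xs!d < ys!d"
    using lex_lessE[OF assms] by metis
  obtain e where e: "e < length ys" "\<And>r. r < e \<Longrightarrow> ys!r = xs!r" "ys!e < xs!e"
    using lex_lessE[OF \<open>lex_less ys xs\<close> assms(2)[symmetric]] by metis
  show False
    by (cases d e rule: linorder_cases) (use d e in \<open>metis less_asym less_irrefl\<close>)+
qed

lemma lex_less_irrefl: "\<not> lex_less xs xs"
  using lex_less_asym by blast

lemma lex_le_if_lex_less: "lex_less xs ys \<Longrightarrow> lex_le xs ys"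
  unfolding lex_le_def by simp

lemma lex_le_imp_not_lex_less: "lex_le xs ys \<Longrightarrow> length xs = length ys \<Longrightarrow> \<not> lex_less ys xs"
  unfolding lex_le_def using lex_less_asym lex_less_irrefl by metis

lemma lex_le_antisym: "lex_le xs ys \<Longrightarrow> lex_le ys xs \<Longrightarrow> length xs = length ys \<Longrightarrow> xs = ys"
  unfolding lex_le_def using lex_less_asym by blast

lemma lex_less_append_same_length:
  "length xs = length ys \<Longrightarrow>
   lex_less (xs @ us) (ys @ vs) \<longleftrightarrow> lex_less xs ys \<or> (xs = ys \<and> lex_less us vs)"
proof (induction xs arbitrary: ys)
  case Nil then show ?case by simp
next
  case (Cons x xs)
  then obtain y ys' where "ys = y # ys'" by (cases ys) auto
  with Cons show ?case by auto
qed

lemma lex_le_imp_nth0_le: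
  assumes "lex_le xs ys" "length xs = length ys" "0 < length xs"
  shows "xs!0 \<le> ys!0"
proof -
  obtain x xs' y ys' where "xs = x # xs'" "ys = y # ys'"
    using assms by (cases xs; cases ys) auto
  then show ?thesis using assms(1) unfolding lex_le_def by auto
qed

lemma lex_less_if_zeros_upto:
  assumes "length xs = length ys" "p < length ys" "xs!p \<noteq> 0" "\<forall>r\<le>p. ys!r = 0"
  shows "lex_less ys xs"
proof -
  define d where "d = (LEAST r. xs!r \<noteq> 0)"
  have "xs!d \<noteq> 0" "d \<le> p" "\<And>r. r < d \<Longrightarrow> xs!r = 0"
    unfolding d_def using assms(3) by (auto intro: LeastI Least_le dest: not_less_Least)
  then show ?thesis by (intro lex_lessI[of _ _ d]) (use assms in auto)
qed

lemma lex_less_incr_update: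
  assumes "length x = length y" "q < length y" "x!p = y!q" "lex_le y x"
    and "p < q \<or> (p = q \<and> lex_less y x)"
  shows "lex_less (y[q := y!q + 1]) (x[p := y!q + 1])"
proof (cases "y = x")
  case True
  then have "p < q" using assms(5) lex_less_irrefl by blast
  then show ?thesis by (intro lex_lessI[of _ _ p]) (use assms True in auto)
next
  case False
  then have "lex_less y x" using assms(4) unfolding lex_le_def by simp
  then obtain d where d: "d < length y" "\<And>r. r < d \<Longrightarrow> y!r = x!r" "y!d < x!d"
    using lex_lessE assms(1) by metis
  consider "d < p" | "p \<le> d" "p < q" | "p = q" using assms(5) by linarith
  then show ?thesis
  proof cases
    case 1 then show ?thesis by (intro lex_lessI[of _ _ d]) (use assms d in auto)
  next
    case 2
    then have "y!p \<le> x!p" using d by (cases "d = p") auto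
    then show ?thesis by (intro lex_lessI[of _ _ p]) (use assms 2 d in auto)
  next
    case 3
    then show ?thesis
      by (intro lex_lessI[of _ _ d]) (use assms d in \<open>auto simp: nth_list_update\<close>)
  qed
qed

lemma lex_less_decr_update:
  assumes "length x = length y" "p < length y" "x!p = y!q" "0 < y!q" "lex_le y x"
    and "q < p \<or> (p = q \<and> lex_less y x)"
  shows "lex_less (y[q := y!q - 1]) (x[p := y!q - 1])"
proof (cases "y = x")
  case True
  then have "q < p" using assms(6) lex_less_irrefl by blast
  then show ?thesis by (intro lex_lessI[of _ _ q]) (use assms True in auto)
next
  case False
  then have "lex_less y x" using assms(5) unfolding lex_le_def by simp
  then obtain d where d: "d < length y" "\<And>r. r < d \<Longrightarrow> y!r = x!r" "y!d < x!d"
    using lex_lessE assms(1) by metis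
  consider "d < q" | "q \<le> d" "q < p" | "p = q" using assms(6) by linarith
  then show ?thesis
  proof cases
    case 1 then show ?thesis by (intro lex_lessI[of _ _ d]) (use assms d in auto)
  next
    case 2
    then have "y!q \<le> x!q" using d by (cases "d = q") auto
    then show ?thesis by (intro lex_lessI[of _ _ q]) (use assms 2 d in auto)
  next
    case 3
    then show ?thesis
      by (intro lex_lessI[of _ _ d]) (use assms d in \<open>auto simp: nth_list_update\<close>)
  qed
qed

lemma nth_rotate_if:
  "p < length xs \<Longrightarrow> r < length xs \<Longrightarrow>
   rotate p xs ! r = xs ! (if p + r < length xs then p + r else p + r - length xs)"
  by (simp add: nth_rotate mod_if)

lemma nth_rotate_rev_if:
  "p < length xs \<Longrightarrow> r < length xs \<Longrightarrow> rotate p (rev xs) ! r =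
     xs ! (length xs - 1 - (if p + r < length xs then p + r else p + r - length xs))"
  by (simp add: nth_rotate_if rev_nth)

lemma nth_rotate_shifted_index:
  assumes "q < length xs" "p < length xs"
  shows "rotate p xs ! ((q + length xs - p) mod length xs) = xs ! q"
  using assms by (auto simp: nth_rotate mod_if)

lemma rotate_list_update:
  assumes "q < length xs" "p < length xs"
  shows "rotate p (xs[q := v]) = (rotate p xs)[(q + length xs - p) mod length xs := v]"
proof (rule nth_equalityI)
  let ?n = "length xs"
  let ?i = "\<lambda>r. if p + r < ?n then p + r else p + r - ?n"
  fix r assume "r < length (rotate p (xs[q := v]))"
  then have r: "r < ?n" by simp
  have hit: "?i r = q \<longleftrightarrow> (q + ?n - p) mod ?n = r"
    using assms r by (auto simp: mod_if)
  have "rotate p (xs[q := v]) ! r = xs[q := v] ! ?i r"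
    using assms r by (simp add: nth_rotate_if)
  also have "\<dots> = (if (q + ?n - p) mod ?n = r then v else xs ! ?i r)"
    using hit assms r by (auto simp: nth_list_update)
  also have "\<dots> = (rotate p xs)[(q + ?n - p) mod ?n := v] ! r"
    using assms r by (simp add: nth_list_update nth_rotate_if)
  finally show "rotate p (xs[q := v]) ! r = (rotate p xs)[(q + ?n - p) mod ?n := v] ! r" .
qed simp

lemma nth_rotate_rev_shifted_index:
  assumes "q < length xs" "p < length xs"
  shows "rotate p (rev xs) ! ((length xs - 1 - q + length xs - p) mod length xs) = xs ! q"
  using nth_rotate_shifted_index[of "length xs - 1 - q" "rev xs" p] assms by (simp add: rev_nth)

lemma rotate_rev_list_update:
  assumes "q < length xs" "p < length xs"
  shows "rotate p (rev (xs[q := v])) =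
    (rotate p (rev xs))[(length xs - 1 - q + length xs - p) mod length xs := v]"
  using rotate_list_update[of "length xs - 1 - q" "rev xs" p v] assms by (simp add: rev_update)

lemma rots_rotate: "rots (rotate m xs) = rots xs"
proof (cases "xs = []")
  case False
  let ?n = "length xs"
  have "rotate p (rotate m xs) \<in> rots xs" for p
  proof -
    have "rotate p (rotate m xs) = rotate ((p + m) mod ?n) xs"
      by (simp add: rotate_rotate rotate_conv_mod[of "p + m"])
    then show ?thesis unfolding rots_def using False by auto
  qed
  moreover have "rotate p xs \<in> rots (rotate m xs)" if "p < ?n" for p
  proof -
    let ?a = "(p + ?n - m mod ?n) mod ?n"
    have "rotate ?a (rotate m xs) = rotate ((?a + m) mod ?n) xs"
      by (simp add: rotate_rotate rotate_conv_mod[of "?a + m"])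
    also have "(?a + m) mod ?n = (p + ?n - m mod ?n + m mod ?n) mod ?n"
      by (simp add: mod_add_left_eq mod_add_right_eq)
    also have "\<dots> = p"
    proof -
      have "m mod ?n < ?n" using False by simp
      then show ?thesis using that by simp
    qed
    finally show ?thesis unfolding rots_def using False by (auto intro!: exI[of _ ?a])
  qed
  ultimately show ?thesis unfolding rots_def[of "rotate m xs"] rots_def[of xs] by auto
qed simp

lemma necklace_of_eqI:
  assumes "\<rho> = rotate m xs" "xs \<noteq> []" "\<forall>zs\<in>rots \<rho>. lex_le \<rho> zs"
  shows "necklace_of xs = \<rho>"
  unfolding necklace_of_def
proof (rule the_equality)
  have rots_eq: "rots \<rho> = rots xs" using assms(1) rots_rotate by simp
  have "\<rho> \<in> rots \<rho>" unfolding rots_def using assms(1,2) by (auto intro!: exI[of _ 0])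
  then show "\<rho> \<in> rots xs \<and> (\<forall>zs\<in>rots xs. lex_le \<rho> zs)" using rots_eq assms(3) by auto
  fix ys assume ys: "ys \<in> rots xs \<and> (\<forall>zs\<in>rots xs. lex_le ys zs)"
  then have "lex_le ys \<rho>" "lex_le \<rho> ys" using rots_eq \<open>\<rho> \<in> rots \<rho>\<close> assms(3) by auto
  moreover have "length ys = length \<rho>" using ys assms(1) unfolding rots_def by auto
  ultimately show "ys = \<rho>" using lex_le_antisym by blast
qed

lemma rev_in_rots_iff: "rev xs \<in> rots xs \<longleftrightarrow> (\<exists>p<length xs. xs = rotate p (rev xs))"
proof -
  have key: "rev ys \<in> rots ys" if "ys = rotate p (rev ys)" "p < length ys"
    for ys :: "nat list" and p
  proof -
    let ?n = "length ys"
    let ?a = "(?n - p) mod ?n"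
    have "rotate ?a ys = rotate ?a (rotate p (rev ys))"
      using that(1) by (rule arg_cong)
    also have "\<dots> = rotate ((?a + p) mod ?n) (rev ys)"
      by (simp add: rotate_rotate rotate_conv_mod[of "?a + p"])
    also have "(?a + p) mod ?n = 0" using that(2) by (simp add: mod_add_left_eq)
    moreover have "?a < ?n" using that(2) by (intro mod_less_divisor) auto
    ultimately show ?thesis unfolding rots_def by (auto intro!: exI[of _ ?a])
  qed
  show ?thesis
  proof
    assume "rev xs \<in> rots xs"
    then obtain p where p: "p < length xs" "rev xs = rotate p xs" unfolding rots_def by auto
    have "rev xs = rotate p (rev (rev xs))" by (subst rev_rev_ident) (rule p(2))
    from key[OF this] p(1) have "xs \<in> rots (rev xs)" by simp
    then show "\<exists>p<length xs. xs = rotate p (rev xs)" unfolding rots_def by auto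
  next
    assume "\<exists>p<length xs. xs = rotate p (rev xs)"
    with key show "rev xs \<in> rots xs" by blast
  qed
qed

lemma asym_bracelets_iff:
  "xs \<in> asym_bracelets k n \<longleftrightarrow> length xs = n \<and> set xs \<subseteq> {0..<k} \<and>
     (\<forall>p<n. lex_le xs (rotate p xs)) \<and> (\<forall>p<n. lex_less xs (rotate p (rev xs)))"
proof -
  have necklace: "is_necklace xs \<longleftrightarrow> (\<forall>p<length xs. lex_le xs (rotate p xs))"
    unfolding is_necklace_def rots_def by auto
  have bracelet: "is_bracelet xs \<longleftrightarrow> (\<forall>p<length xs. lex_le xs (rotate p xs)) \<and>
      (\<forall>p<length xs. lex_le xs (rotate p (rev xs)))"
    unfolding is_bracelet_def rots_def by auto
  have "lex_le xs ys \<and> xs \<noteq> ys \<longleftrightarrow> lex_less xs ys" for ys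
    unfolding lex_le_def using lex_less_irrefl by auto
  then have asymmetric: "(\<forall>p<length xs. lex_le xs (rotate p (rev xs))) \<and> rev xs \<notin> rots xs
      \<longleftrightarrow> (\<forall>p<length xs. lex_less xs (rotate p (rev xs)))"
    unfolding rev_in_rots_iff by blast
  show ?thesis
    unfolding asym_bracelets_def mem_Collect_eq necklace bracelet
    using asymmetric by (cases "length xs = n") blast+
qed

lemma lex_less_rotate_incr_update:
  assumes "lex_le a (rotate p a)" "0 < p" "p \<le> q" "q < length a"
  shows "lex_less (a[q := a!q + 1]) (rotate p (a[q := a!q + 1]))"
proof -
  have p: "p < length a" using assms by simp
  have "q + length a - p = (q - p) + length a" using assms by simp
  then have shift: "(q + length a - p) mod length a = q - p"
    using assms by (metis mod_add_self2 mod_less less_imp_diff_less)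
  have "rotate p a ! (q - p) = a!q"
    using nth_rotate_shifted_index[OF assms(4) p] shift by simp
  then have "lex_less (a[q := a!q + 1]) ((rotate p a)[q - p := a!q + 1])"
    using assms by (intro lex_less_incr_update) simp_all
  then show ?thesis using rotate_list_update[OF assms(4) p] shift by simp
qed

lemma lex_less_rotate_rev_incr_update:
  assumes "lex_less a (rotate p (rev a))" "p < length a" "q < length a"
    and "(length a - 1 - q + length a - p) mod length a \<le> q"
  shows "lex_less (a[q := a!q + 1]) (rotate p (rev (a[q := a!q + 1])))"
proof -
  have "lex_less (a[q := a!q + 1])
      ((rotate p (rev a))[(length a - 1 - q + length a - p) mod length a := a!q + 1])"
    by (rule lex_less_incr_update)
      (use assms nth_rotate_rev_shifted_index[OF assms(3,2)] in \<open>auto simp: lex_le_if_lex_less\<close>)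
  then show ?thesis using rotate_rev_list_update[OF assms(3,2)] by simp
qed

(* (n - 1 - q + n - p) mod n is the position of symbol q inside rotate p (rev a); the reversed
   rotations that move it to a later position are the ones left to the caller. *)
lemma incr_update_in_asym_bracelets:
  assumes "a \<in> asym_bracelets k n" "q < n" "a!q + 1 < k"
    and "\<And>p. q < p \<Longrightarrow> p < n \<Longrightarrow> a[q := a!q + 1] ! 0 < a[q := a!q + 1] ! p"
    and "\<And>p. p < n \<Longrightarrow> q < (n - 1 - q + n - p) mod n \<Longrightarrow>
      lex_less (a[q := a!q + 1]) (rotate p (rev (a[q := a!q + 1])))"
  shows "a[q := a!q + 1] \<in> asym_bracelets k n"
proof -
  let ?b = "a[q := a!q + 1]"
  have a: "length a = n" "set a \<subseteq> {0..<k}" "\<forall>p<n. lex_le a (rotate p a)"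
      "\<forall>p<n. lex_less a (rotate p (rev a))"
    using assms(1) unfolding asym_bracelets_iff by auto
  have "lex_le ?b (rotate p ?b)" if p: "p < n" for p
  proof -
    consider "p = 0" | "0 < p" "p \<le> q" | "q < p" by linarith
    then show ?thesis
    proof cases
      case 1 then show ?thesis by (simp add: lex_le_def)
    next
      case 2
      have "lex_less ?b (rotate p ?b)"
        by (rule lex_less_rotate_incr_update) (use a p 2 assms(2) in auto)
      then show ?thesis by (rule lex_le_if_lex_less)
    next
      case 3
      have "rotate p ?b ! 0 = ?b ! p" using p a(1) by (simp add: nth_rotate del: rotate_Suc)
      then have "lex_less ?b (rotate p ?b)"
        using assms(4)[OF 3 p] p a(1) by (intro lex_lessI[of _ _ 0]) auto
      then show ?thesis by (rule lex_le_if_lex_less)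
    qed
  qed
  moreover have "lex_less ?b (rotate p (rev ?b))" if p: "p < n" for p
  proof (cases "q < (n - 1 - q + n - p) mod n")
    case False
    then show ?thesis
      using lex_less_rotate_rev_incr_update[of a p q] a p assms(2) by simp
  qed (use assms(5) p in blast)
  moreover have "set ?b \<subseteq> {0..<k}"
    using a(2) assms(3) set_update_subset_insert[of a q "a!q + 1"] by auto
  ultimately show ?thesis unfolding asym_bracelets_iff using a(1) by simp
qed

lemma snoc_incr_in_asym_bracelets:
  assumes "P @ [x] \<in> asym_bracelets k n" "x + 1 < k"
  shows "P @ [x + 1] \<in> asym_bracelets k n"
proof -
  have n: "n = Suc (length P)" using assms(1) unfolding asym_bracelets_iff by simp
  then have "m mod n \<le> length P" for m by (simp add: less_Suc_eq_le[symmetric])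
  then have "(P @ [x])[length P := (P @ [x])!length P + 1] \<in> asym_bracelets k n"
    by (intro incr_update_in_asym_bracelets) (use assms n in \<open>auto simp: not_less[symmetric]\<close>)
  then show ?thesis by simp
qed

lemma rotate_two_rev_snoc2: "rotate 2 (rev (P @ [x, y])) = rev P @ [y, x]"
  using rotate_append[of "[y, x]" "rev P"] by (simp add: numeral_2_eq_2)

lemma incr_second_last_in_asym_bracelets:
  assumes "P @ [x, k - 1] \<in> asym_bracelets k n" "P \<noteq> []" "x + 1 < k"
    and "x + 2 < k \<or> \<not> is_palindrome P"
  shows "P @ [x + 1, k - 1] \<in> asym_bracelets k n"
proof -
  let ?a = "P @ [x, k - 1]" and ?q = "length P"
  have a: "length ?a = n" "\<forall>p<n. lex_le ?a (rotate p ?a)" "\<forall>p<n. lex_less ?a (rotate p (rev ?a))"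
    using assms(1) unfolding asym_bracelets_iff by auto
  have n: "n = ?q + 2" "0 < ?q" using a(1) assms(2) by auto
  have "?a!0 \<le> rotate ?q ?a ! 0"
    using a(2) n by (intro lex_le_imp_nth0_le) auto
  then have first: "?a!0 < k - 1"
    using n assms(3) by (simp add: nth_rotate nth_append)
  have "?a[?q := ?a!?q + 1] \<in> asym_bracelets k n"
  proof (rule incr_update_in_asym_bracelets)
    fix p assume "?q < p" "p < n"
    then show "?a[?q := ?a!?q + 1] ! 0 < ?a[?q := ?a!?q + 1] ! p"
      using first n by (auto simp: nth_append)
  next
    fix p assume p: "p < n" "?q < (n - 1 - ?q + n - p) mod n"
    then have "p = 2" using n by (cases "p = 0"; cases "p = 1"; cases "p = 2") (auto simp: mod_Suc)
    have "lex_less ?a (rotate 2 (rev ?a))" using a(3) n by simp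
    then have "lex_less ?a (rev P @ [k - 1, x])" by (simp only: rotate_two_rev_snoc2)
    then have "lex_less P (rev P) \<or> P = rev P"
      using lex_less_append_same_length[of P "rev P"] by auto
    then have "lex_less (P @ [x + 1, k - 1]) (rev P @ [k - 1, x + 1])"
      using assms(4) lex_less_append_same_length[of P "rev P"] unfolding is_palindrome_def by auto
    then show "lex_less (?a[?q := ?a!?q + 1]) (rotate p (rev (?a[?q := ?a!?q + 1])))"
      using \<open>p = 2\<close> rotate_two_rev_snoc2[of P "x + 1"] by simp
  qed (use assms(1,3) n in auto)
  then show ?thesis by simp
qed

lemma palindrome_last_eq_hd: "is_palindrome xs \<Longrightarrow> last xs = hd xs"
  unfolding is_palindrome_def by (metis hd_rev)

lemma rotate_three_rev_frame:
  assumes "is_palindrome \<gamma>"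
  shows "rotate 3 (rev (0 # \<gamma> @ [y, 1, 2])) = (\<gamma> @ [0]) @ [2, 1, y]"
proof -
  have "rev \<gamma> = \<gamma>" using assms unfolding is_palindrome_def by (rule sym)
  then have "rev (0 # \<gamma> @ [y, 1, 2]) = [2, 1, y] @ (\<gamma> @ [0])" by simp
  then show ?thesis using rotate_append[of "[2, 1, y]" "\<gamma> @ [0]"] by (simp add: numeral_3_eq_3)
qed

lemma rotate_four_rev_frame:
  assumes "is_palindrome (g # \<delta>)"
  shows "rotate 4 (rev (0 # (g # \<delta>) @ [y, 1, 2])) = (\<delta> @ [0, 2]) @ [1, y, g]"
proof -
  have "rev (g # \<delta>) = g # \<delta>" using assms unfolding is_palindrome_def by (rule sym)
  have "rev (0 # (g # \<delta>) @ [y, 1, 2]) = [2, 1, y] @ rev (g # \<delta>) @ [0]" by simp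
  also have "\<dots> = [2, 1, y, g] @ (\<delta> @ [0])" unfolding \<open>rev (g # \<delta>) = g # \<delta>\<close> by simp
  finally show ?thesis
    using rotate_append[of "[2, 1, y, g]" "\<delta> @ [0]"] by (simp add: numeral_eq_Suc)
qed

lemma incr_third_last_in_asym_bracelets:
  assumes "0 # \<gamma> @ [0, 1, 2] \<in> asym_bracelets 3 n" "is_palindrome \<gamma>" "\<gamma> \<noteq> []" "hd \<gamma> \<noteq> 2"
  shows "0 # \<gamma> @ [1, 1, 2] \<in> asym_bracelets 3 n"
proof -
  let ?a = "0 # \<gamma> @ [0, 1, 2]" and ?q = "Suc (length \<gamma>)"
  have a: "length ?a = n" "\<forall>p<n. lex_less ?a (rotate p (rev ?a))"
    using assms(1) unfolding asym_bracelets_iff by auto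
  have n: "n = ?q + 3" "0 < length \<gamma>" using a(1) assms(3) by auto
  have b: "?a[?q := ?a!?q + 1] = 0 # \<gamma> @ [1, 1, 2]" by (simp add: list_update_append)
  have "?a[?q := ?a!?q + 1] \<in> asym_bracelets 3 n"
  proof (rule incr_update_in_asym_bracelets)
    fix p assume "?q < p" "p < n"
    then show "?a[?q := ?a!?q + 1] ! 0 < ?a[?q := ?a!?q + 1] ! p"
      using n by (auto simp: nth_append nth_Cons list_update_append split: nat.split)
  next
    fix p assume p: "p < n" "?q < (n - 1 - ?q + n - p) mod n"
    then have "p = 3 \<or> p = 4" using n
      by (cases "p = 0"; cases "p = 1"; cases "p = 2"; cases "p = 3"; cases "p = 4")
        (auto simp: mod_if split: if_splits)
    then show "lex_less (?a[?q := ?a!?q + 1]) (rotate p (rev (?a[?q := ?a!?q + 1])))"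
    proof
      assume "p = 3"
      have "lex_less ?a (rotate 3 (rev ?a))" using a(2) n by simp
      then have "lex_less ((0 # \<gamma>) @ [0, 1, 2]) ((\<gamma> @ [0]) @ [2, 1, 0])"
        unfolding rotate_three_rev_frame[OF assms(2)] by simp
      then have "lex_le (0 # \<gamma>) (\<gamma> @ [0])"
        using lex_less_append_same_length[of "0 # \<gamma>" "\<gamma> @ [0]"] unfolding lex_le_def by auto
      then have "lex_less ((0 # \<gamma>) @ [1, 1, 2]) ((\<gamma> @ [0]) @ [2, 1, 1])"
        using lex_less_append_same_length[of "0 # \<gamma>" "\<gamma> @ [0]"] unfolding lex_le_def by auto
      then show ?thesis unfolding b \<open>p = 3\<close> rotate_three_rev_frame[OF assms(2)] by simp
    next
      assume "p = 4"
      obtain g \<delta> where \<gamma>: "\<gamma> = g # \<delta>" using assms(3) by (cases \<gamma>) auto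
      have ne: "0 # g # \<delta> \<noteq> \<delta> @ [0, 2]"
      proof
        assume "0 # g # \<delta> = \<delta> @ [0, 2]"
        then have "last (0 # g # \<delta>) = last (\<delta> @ [0, 2])" by (rule arg_cong)
        then have "last \<gamma> = 2" using \<gamma> by simp
        then show False using palindrome_last_eq_hd[OF assms(2)] assms(4) by simp
      qed
      have "lex_less ?a (rotate 4 (rev ?a))" using a(2) n by simp
      then have "lex_less ((0 # g # \<delta>) @ [0, 1, 2]) ((\<delta> @ [0, 2]) @ [1, 0, g])"
        unfolding \<gamma> rotate_four_rev_frame[OF assms(2)[unfolded \<gamma>]] by simp
      then have "lex_less (0 # g # \<delta>) (\<delta> @ [0, 2])"
        using ne lex_less_append_same_length[of "0 # g # \<delta>" "\<delta> @ [0, 2]"] by auto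
      then have "lex_less ((0 # g # \<delta>) @ [1, 1, 2]) ((\<delta> @ [0, 2]) @ [1, 1, g])"
        using lex_less_append_same_length[of "0 # g # \<delta>" "\<delta> @ [0, 2]"] by auto
      then show ?thesis
        using rotate_four_rev_frame[OF assms(2)[unfolded \<gamma>], of 1] unfolding b \<open>p = 4\<close> \<gamma> by simp
    qed
  qed (use assms(1) n in auto)
  then show ?thesis unfolding b .
qed

lemma decr_first_nonzero_in_asym_bracelets:
  assumes "a \<in> asym_bracelets k n" "i < n" "a!i \<noteq> 0" "\<forall>r<i. a!r = 0" "i = 0 \<or> 2 \<le> a!i"
  shows "a[i := a!i - 1] \<in> asym_bracelets k n"
proof -
  let ?v = "a!i - 1" and ?b = "a[i := a!i - 1]"
  have a: "length a = n" "set a \<subseteq> {0..<k}" "\<forall>p<n. lex_le a (rotate p a)"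
      "\<forall>p<n. lex_less a (rotate p (rev a))"
    using assms(1) unfolding asym_bracelets_iff by auto
  have below_i: "lex_less ?b (x[p := ?v])" if "p < i" "length x = n" for x p
    by (rule lex_less_if_zeros_upto[of _ _ p]) (use that a(1) assms(2-5) in auto)
  have "lex_le ?b (rotate p ?b)" if p: "p < n" for p
  proof (cases "p = 0")
    case False
    let ?\<pi> = "(i + n - p) mod n"
    have "?\<pi> \<noteq> i" using False p assms(2) by (auto simp: mod_if)
    moreover have "?\<pi> < n" using p by simp
    ultimately have "lex_less ?b ((rotate p a)[?\<pi> := ?v])"
      using below_i[of ?\<pi> "rotate p a"] lex_less_decr_update[of "rotate p a" a ?\<pi> i]
        a nth_rotate_shifted_index[of i a p] p assms(2,3)
      by (cases "?\<pi> < i") auto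
    then show ?thesis using rotate_list_update[of i a p] p a(1) assms(2)
      by (simp add: lex_le_if_lex_less)
  qed (simp add: lex_le_def)
  moreover have "lex_less ?b (rotate p (rev ?b))" if p: "p < n" for p
  proof -
    let ?\<pi> = "(n - 1 - i + n - p) mod n"
    have "?\<pi> < n" using p by simp
    then have "lex_less ?b ((rotate p (rev a))[?\<pi> := ?v])"
      using below_i[of ?\<pi> "rotate p (rev a)"] lex_less_decr_update[of "rotate p (rev a)" a ?\<pi> i]
        a nth_rotate_rev_shifted_index[of i a p] p assms(2,3) lex_le_if_lex_less
      by (cases "?\<pi> < i") (auto simp: not_less le_less)
    then show ?thesis using rotate_rev_list_update[of i a p] p a(1) assms(2) by simp
  qed
  moreover have "set ?b \<subseteq> {0..<k}"
  proof -
    have "a!i < k" using a(1,2) assms(2) by (metis atLeastLessThan_iff nth_mem subsetD)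
    then show ?thesis using a(2) set_update_subset_insert[of a i ?v] by auto
  qed
  ultimately show ?thesis unfolding asym_bracelets_iff using a(1) by simp
qed

lemma necklace_zero_run_bound:
  assumes "\<forall>p<length a. lex_le a (rotate p a)" "a!i \<noteq> 0" "\<forall>r<i. a!r = 0" "m + i < length a"
  shows "\<exists>s\<le>i. a!(m + s) \<noteq> 0"
proof (rule ccontr)
  assume "\<not> ?thesis"
  then have "\<forall>s\<le>i. rotate m a ! s = 0" using assms(4) by (auto simp: nth_rotate)
  then have "lex_less (rotate m a) a"
    using assms(2,4) by (intro lex_less_if_zeros_upto[of _ _ i]) auto
  moreover have "lex_le a (rotate m a)" using assms(1,4) by simp
  ultimately show False using lex_le_imp_not_lex_less by fastforce
qed

lemma lex_le_rotate_if_unique_zero_run: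
  assumes "i < length \<rho>" "\<forall>r\<le>i. \<rho>!r = 0" "\<rho>!(length \<rho> - 1) \<noteq> 0"
    and run: "\<And>m. m + i < length \<rho> \<Longrightarrow> \<forall>s\<le>i. \<rho>!(m + s) = 0 \<Longrightarrow> m = 0"
    and p: "p < length \<rho>"
  shows "lex_le \<rho> (rotate p \<rho>)"
proof (cases "\<exists>r\<le>i. rotate p \<rho> ! r \<noteq> 0")
  case True
  then obtain r where "r \<le> i" "rotate p \<rho> ! r \<noteq> 0" by auto
  then have "lex_less \<rho> (rotate p \<rho>)"
    using assms(1,2) by (intro lex_less_if_zeros_upto[of _ _ r]) auto
  then show ?thesis by (rule lex_le_if_lex_less)
next
  case False
  then have zeros: "\<And>r. r \<le> i \<Longrightarrow> rotate p \<rho> ! r = 0" by auto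
  show ?thesis
  proof (cases "p + i < length \<rho>")
    case True
    have "\<forall>s\<le>i. \<rho>!(p + s) = 0" using zeros True by (auto simp: nth_rotate)
    then have "p = 0" using run True by blast
    then show ?thesis by (simp add: lex_le_def)
  next
    case False
    have "rotate p \<rho> ! (length \<rho> - 1 - p) = \<rho>!(length \<rho> - 1)" using p by (simp add: nth_rotate)
    then show ?thesis using zeros[of "length \<rho> - 1 - p"] False assms(3) by simp
  qed
qed

lemma lex_less_rotate_rev_if_unique_zero_run:
  assumes "i + 1 < length \<rho>" "\<forall>r\<le>i. \<rho>!r = 0" "\<rho>!(i + 1) < \<rho>!(length \<rho> - 1)"
    and run: "\<And>m. m + i < length \<rho> \<Longrightarrow> \<forall>s\<le>i. \<rho>!(m + s) = 0 \<Longrightarrow> m = 0"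
    and p: "p < length \<rho>"
  shows "lex_less \<rho> (rotate p (rev \<rho>))"
proof (cases "\<exists>r\<le>i. rotate p (rev \<rho>) ! r \<noteq> 0")
  case True
  then obtain r where "r \<le> i" "rotate p (rev \<rho>) ! r \<noteq> 0" by auto
  then show ?thesis using assms(1,2) by (intro lex_less_if_zeros_upto[of _ _ r]) auto
next
  case False
  then have zeros: "\<And>r. r \<le> i \<Longrightarrow> rotate p (rev \<rho>) ! r = 0" by auto
  let ?n = "length \<rho>"
  show ?thesis
  proof (cases "p + i < ?n")
    case True
    have "\<forall>s\<le>i. \<rho>!(?n - 1 - p - i + s) = 0"
    proof (intro allI impI)
      fix s assume s: "s \<le> i"
      have "rotate p (rev \<rho>) ! (i - s) = \<rho>!(?n - 1 - (p + (i - s)))"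
        using s True p by (simp add: nth_rotate_rev_if)
      also have "?n - 1 - (p + (i - s)) = ?n - 1 - p - i + s" using s True by linarith
      finally show "\<rho>!(?n - 1 - p - i + s) = 0" using zeros[of "i - s"] by (metis diff_le_self)
    qed
    then have "?n - 1 - p - i = 0" by (rule run[rotated]) (use True in simp)
    then have "p + (i + 1) = ?n" using True by simp
    then have "rotate p (rev \<rho>) ! (i + 1) = \<rho>!(?n - 1)"
      using assms(1) p by (simp add: nth_rotate_rev_if)
    then show ?thesis
      using zeros assms(1-3) by (intro lex_lessI[of _ _ "i + 1"]) (auto simp: less_Suc_eq_le)
  next
    case False
    have "rotate p (rev \<rho>) ! (?n - p) = \<rho>!(?n - 1)"
      using p False assms(1) by (simp add: nth_rotate_rev_if)
    then show ?thesis using zeros[of "?n - p"] False assms(3) by simp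
  qed
qed

lemma LastSymbol_in_asym_bracelets:
  assumes "a \<in> asym_bracelets k n" "a!(n - 1) = k - 1"
    and "0 < i" "i < n" "a!i = 1" "\<forall>r<i. a!r = 0" "2 \<le> a!(n - 2)"
  shows "LastSymbol k a \<in> asym_bracelets k n"
proof -
  have a: "length a = n" "set a \<subseteq> {0..<k}" "\<forall>p<n. lex_le a (rotate p a)"
    using assms(1) unfolding asym_bracelets_iff by auto
  have "a!(n - 2) < k" using a assms(3,4) by (metis atLeastLessThan_iff nth_mem subsetD diff_less
      less_trans zero_less_numeral)
  then have k: "3 \<le> k" using assms(7) by linarith
  have i: "i + 2 < n"
    using assms(2-5,7) k by (cases "i = n - 1"; cases "i = n - 2") auto
  \<comment> \<open>the rotation of \<open>butlast a @ [0]\<close> starting with the new 0\<close>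
  define \<rho> where "\<rho> = 0 # butlast a"
  have \<rho>: "length \<rho> = n" "\<And>r. r < n - 1 \<Longrightarrow> \<rho>!Suc r = a!r"
    unfolding \<rho>_def using a(1) i by (auto simp: nth_butlast)
  have zeros: "\<forall>r\<le>i. \<rho>!r = 0"
  proof (intro allI impI)
    fix r assume "r \<le> i"
    then show "\<rho>!r = 0" using \<rho>(2) assms(6) i by (cases r) (auto simp: \<rho>_def)
  qed
  have "\<rho>!(i + 1) = 1" "\<rho>!(n - 1) = a!(n - 2)"
    using \<rho>(2)[of i] \<rho>(2)[of "n - 2"] assms(5) i by (simp_all add: Suc_diff_Suc numeral_2_eq_2)
  then have step: "\<rho>!(i + 1) < \<rho>!(length \<rho> - 1)" using assms(7) \<rho>(1) by simp
  have run: "m = 0" if "m + i < length \<rho>" "\<forall>s\<le>i. \<rho>!(m + s) = 0" for m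
  proof (rule ccontr)
    assume "m \<noteq> 0"
    then obtain m' where m: "m = Suc m'" by (cases m) auto
    have "\<exists>s\<le>i. a!(m' + s) \<noteq> 0"
      using a(1,3) assms(3,5,6) that(1) \<rho>(1) m by (intro necklace_zero_run_bound) auto
    then show False using that \<rho> m by auto
  qed
  have "\<rho> \<in> asym_bracelets k n"
    unfolding asym_bracelets_iff
    using \<rho>(1) a(2) k zeros step run i
      lex_le_rotate_if_unique_zero_run[of i \<rho>] lex_less_rotate_rev_if_unique_zero_run[of i \<rho>]
    by (auto simp: \<rho>_def dest: in_set_butlastD)
  moreover have "LastSymbol k a = necklace_of (butlast a @ [0])"
  proof -
    have "last a = k - 1" using assms(2) a(1) i by (subst last_conv_nth) auto
    then show ?thesis using k by (simp add: LastSymbol_def)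
  qed
  moreover have "necklace_of (butlast a @ [0]) = \<rho>"
  proof (rule necklace_of_eqI)
    show "\<rho> = rotate (n - 1) (butlast a @ [0])"
      unfolding \<rho>_def using rotate_append[of "butlast a" "[0]"] a(1) by simp
    show "\<forall>zs\<in>rots \<rho>. lex_le \<rho> zs"
      using \<open>\<rho> \<in> asym_bracelets k n\<close> unfolding rots_def asym_bracelets_iff by auto
  qed simp
  ultimately show ?thesis by simp
qed

lemma last_nonmax_idx_eq:
  assumes "x \<noteq> k - 1"
  shows "last_nonmax_idx k (P @ x # replicate m (k - 1)) = length P"
  unfolding last_nonmax_idx_def
proof (rule Max_eqI)
  let ?a = "P @ x # replicate m (k - 1)"
  fix j assume "j \<in> {j. j < length ?a \<and> ?a!j \<noteq> k - 1}"
  then show "j \<le> length P" by (auto simp: nth_append nth_Cons split: if_splits nat.splits)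
qed (use assms in auto)

lemma LastNonMax_eq:
  assumes "x \<noteq> k - 1"
  shows "LastNonMax k (P @ x # replicate m (k - 1)) = P @ (x + 1) # replicate m (k - 1)"
  unfolding LastNonMax_def Let_def last_nonmax_idx_eq[OF assms] by simp

lemma SecondLastNonMax_eq:
  assumes "x \<noteq> k - 1" "y \<noteq> k - 1"
  shows "SecondLastNonMax k (P @ [x, y, k - 1]) = P @ [x + 1, y, k - 1]"
proof -
  let ?a = "P @ [x, y, k - 1]"
  have "last_nonmax_idx k ?a = Suc (length P)"
    using last_nonmax_idx_eq[OF assms(2), of "P @ [x]" 1] by simp
  moreover have "Max ({j. j < length ?a \<and> ?a!j \<noteq> k - 1} - {Suc (length P)}) = length P"
  proof (rule Max_eqI)
    fix j assume "j \<in> {j. j < length ?a \<and> ?a!j \<noteq> k - 1} - {Suc (length P)}"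
    then show "j \<le> length P" by (auto simp: nth_append nth_Cons split: if_splits nat.splits)
  qed (use assms in auto)
  ultimately show ?thesis by (simp add: SecondLastNonMax_def list_update_append)
qed

lemma FirstNonMin_eq:
  assumes "i < length a" "a!i \<noteq> 0" "\<forall>r<i. a!r = 0"
  shows "FirstNonMin a = a[i := a!i - 1]"
proof -
  have "Min {j. j < length a \<and> a!j \<noteq> 0} = i"
  proof (rule Min_eqI)
    fix j assume "j \<in> {j. j < length a \<and> a!j \<noteq> 0}"
    then show "i \<le> j" using assms(3) by (cases "j < i") auto
  qed (use assms in simp_all)
  moreover have "a[i := a!i - 1] = take i a @ (a!i - 1) # drop (Suc i) a"
    using assms(1) by (rule upd_conv_take_nth_drop)
  ultimately show ?thesis unfolding FirstNonMin_def Let_def by simp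
qed

lemma asym_bracelet_first_nonzero:
  assumes "a \<in> asym_bracelets k n" "0 < n"
  obtains i where "i < n" "a!i \<noteq> 0" "\<forall>r<i. a!r = 0"
proof -
  have a: "length a = n" "lex_less a (rotate 0 (rev a))"
    using assms unfolding asym_bracelets_iff by auto
  have "\<exists>i<n. a!i \<noteq> 0"
  proof (rule ccontr)
    assume "\<not> ?thesis"
    then have "rev a = a" using a(1) by (intro nth_equalityI) (auto simp: rev_nth)
    then show False using a(2) lex_less_irrefl by simp
  qed
  then have "\<exists>i. (i < n \<and> a!i \<noteq> 0) \<and> (\<forall>r<i. \<not> (r < n \<and> a!r \<noteq> 0))"
    by (intro exists_least_iff[THEN iffD1]) auto
  then show ?thesis using that by auto
qed

lemma palindrome_frame:
  assumes "is_palindrome P" "2 \<le> length P"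
  obtains \<gamma> where "is_palindrome \<gamma>" "P = hd P # \<gamma> @ [hd P]"
proof -
  obtain h Q where P: "P = h # Q" using assms(2) by (cases P) auto
  moreover obtain \<gamma> l where Q: "Q = \<gamma> @ [l]" using assms(2) P by (cases Q rule: rev_cases) auto
  have "rev P = P" using assms(1) unfolding is_palindrome_def by (rule sym)
  then have "l # rev \<gamma> @ [h] = h # \<gamma> @ [l]"
    unfolding P Q by (simp only: rev.simps rev_append append.simps)
  then have "l = h \<and> rev \<gamma> @ [h] = \<gamma> @ [l]" by (rule list.inject[THEN iffD1])
  then have "l = h" "rev \<gamma> = \<gamma>" using append1_eq_conv by blast+
  show ?thesis
  proof (rule that)
    show "is_palindrome \<gamma>" unfolding is_palindrome_def using \<open>rev \<gamma> = \<gamma>\<close> by simp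
    show "P = hd P # \<gamma> @ [hd P]" using P Q \<open>l = h\<close> by simp
  qed
qed

lemma last_eq_max_if_LastNonMax_notin:
  assumes "P @ [y] \<in> asym_bracelets k n" "LastNonMax k (P @ [y]) \<notin> asym_bracelets k n"
  shows "y = k - 1"
proof (rule ccontr)
  assume y: "y \<noteq> k - 1"
  have "y < k" using assms(1) unfolding asym_bracelets_iff by auto
  then have "P @ [y + 1] \<in> asym_bracelets k n"
    using snoc_incr_in_asym_bracelets[OF assms(1)] y by simp
  moreover have "LastNonMax k (P @ [y]) = P @ [y + 1]"
    using LastNonMax_eq[OF y, of P 0] by simp
  ultimately show False using assms(2) by simp
qed

lemma first_nonzero_if_FirstNonMin_notin:
  assumes "a \<in> asym_bracelets k n" "0 < n" "FirstNonMin a \<notin> asym_bracelets k n"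
  obtains i where "0 < i" "i < n" "a!i = 1" "\<forall>r<i. a!r = 0"
proof -
  obtain i where i: "i < n" "a!i \<noteq> 0" "\<forall>r<i. a!r = 0"
    using asym_bracelet_first_nonzero[OF assms(1,2)] by auto
  have "length a = n" using assms(1) unfolding asym_bracelets_iff by simp
  then have FNM: "FirstNonMin a = a[i := a!i - 1]" using FirstNonMin_eq i by simp
  have "\<not> (i = 0 \<or> 2 \<le> a!i)"
  proof
    assume "i = 0 \<or> 2 \<le> a!i"
    then have "a[i := a!i - 1] \<in> asym_bracelets k n"
      by (rule decr_first_nonzero_in_asym_bracelets[OF assms(1) i])
    then show False using assms(3) FNM by simp
  qed
  then have "0 < i" "a!i = 1" using i(2) by linarith+
  with i show ?thesis using that by blast
qed

lemma blocked_asym_bracelet_shape: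
  assumes A: "\<alpha> \<in> asym_bracelets k n" and "3 \<le> n" "3 \<le> k"
    and "LastNonMax k \<alpha> \<notin> asym_bracelets k n" "LastSymbol k \<alpha> \<notin> asym_bracelets k n"
    and "FirstNonMin \<alpha> \<notin> asym_bracelets k n"
  obtains P where "k = 3" "\<alpha> = P @ [1, 2]" "is_palindrome P" "\<alpha>!0 = 0" "\<alpha>!1 \<noteq> 2"
proof -
  have len: "length \<alpha> = n" using A unfolding asym_bracelets_iff by auto
  obtain i where i: "0 < i" "i < n" "\<alpha>!i = 1" "\<forall>r<i. \<alpha>!r = 0"
    using first_nonzero_if_FirstNonMin_notin[OF A _ assms(6)] assms(2) by auto
  obtain Q y where Q: "\<alpha> = Q @ [y]" using len assms(2) by (cases \<alpha> rule: rev_cases) auto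
  obtain P x where \<alpha>: "\<alpha> = P @ [x, y]"
    using Q len assms(2) by (cases Q rule: rev_cases) auto
  have y: "y = k - 1" using last_eq_max_if_LastNonMax_notin A assms(4) Q by simp
  have x: "x \<le> 1"
  proof (rule ccontr)
    assume "\<not> x \<le> 1"
    then have "LastSymbol k \<alpha> \<in> asym_bracelets k n"
      using LastSymbol_in_asym_bracelets[OF A _ i] \<alpha> y len by (auto simp: nth_append)
    then show False using assms(5) by simp
  qed
  have "\<not> (x + 2 < k \<or> \<not> is_palindrome P)"
  proof
    assume "x + 2 < k \<or> \<not> is_palindrome P"
    moreover have "P \<noteq> []" "x + 1 < k" using len \<alpha> assms(2,3) x by auto
    ultimately have "P @ [x + 1, k - 1] \<in> asym_bracelets k n"
      using incr_second_last_in_asym_bracelets[of P x k n] A \<alpha> y by simp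
    moreover have "LastNonMax k \<alpha> = P @ [x + 1, k - 1]"
      using LastNonMax_eq[of x k P 1] \<alpha> y x assms(3) by simp
    ultimately show False using assms(4) by simp
  qed
  then have "k = 3" "x = 1" "is_palindrome P" using x assms(3) by auto
  moreover have "\<alpha>!0 = 0" "\<alpha>!1 \<noteq> 2" using i by (cases "i = 1"; simp)+
  ultimately show thesis using that \<alpha> y by simp
qed

lemma SecondLastNonMax_in_asym_bracelets:
  assumes "\<alpha> \<in> asym_bracelets 3 n" "\<alpha> \<noteq> r_str n 3" "4 \<le> n"
    and "\<alpha> = P @ [1, 2]" "is_palindrome P" "\<alpha>!0 = 0" "\<alpha>!1 \<noteq> 2"
  shows "(\<exists>\<gamma>. is_palindrome \<gamma> \<and> \<alpha> = [0] @ \<gamma> @ [0, 1, 2])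
    \<and> SecondLastNonMax 3 \<alpha> \<in> asym_bracelets 3 n"
proof -
  have len: "length \<alpha> = n" using assms(1) unfolding asym_bracelets_iff by simp
  then have "2 \<le> length P" using assms(3,4) by auto
  then obtain \<gamma> where \<gamma>: "is_palindrome \<gamma>" "P = hd P # \<gamma> @ [hd P]"
    using palindrome_frame[OF assms(5)] by blast
  have "hd P = 0" using assms(4,6) \<gamma>(2) by (metis append_Cons nth_Cons_0)
  then have \<alpha>: "\<alpha> = 0 # \<gamma> @ [0, 1, 2]" using assms(4) \<gamma>(2) by simp
  have "\<gamma> \<noteq> []" using assms(2) \<alpha> len by (auto simp: r_str_def numeral_eq_Suc)
  moreover have "hd \<gamma> \<noteq> 2" using assms(7) \<alpha> calculation by (cases \<gamma>) auto
  ultimately have "0 # \<gamma> @ [1, 1, 2] \<in> asym_bracelets 3 n"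
    using incr_third_last_in_asym_bracelets \<gamma>(1) assms(1) \<alpha> by simp
  moreover have "SecondLastNonMax 3 \<alpha> = 0 # \<gamma> @ [1, 1, 2]"
    using SecondLastNonMax_eq[of 0 3 1 "0 # \<gamma>"] \<alpha> by simp
  ultimately show ?thesis using \<gamma>(1) \<alpha> by auto
qed

theorem mainTheorem8:
  fixes n k :: nat and \<alpha> :: "nat list"
  assumes nk: "(n \<ge> 3 \<and> k \<ge> 4) \<or> (n \<ge> 4 \<and> k = 3)"
    and A: "\<alpha> \<in> asym_bracelets k n - {r_str n k}"
    and LNM: "LastNonMax k \<alpha> \<notin> asym_bracelets k n"
    and LS: "LastSymbol k \<alpha> \<notin> asym_bracelets k n"
  shows "(k \<ge> 4 \<longrightarrow> FirstNonMin \<alpha> \<in> asym_bracelets k n)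
       \<and> (k = 3 \<and> FirstNonMin \<alpha> \<notin> asym_bracelets 3 n \<longrightarrow>
            (\<exists>\<gamma>. is_palindrome \<gamma> \<and> \<alpha> = [0] @ \<gamma> @ [0, 1, 2])
            \<and> SecondLastNonMax 3 \<alpha> \<in> asym_bracelets 3 n)"
proof -
  have \<alpha>: "\<alpha> \<in> asym_bracelets k n" "\<alpha> \<noteq> r_str n k" and "3 \<le> n" "3 \<le> k" using A nk by auto
  note blocked = blocked_asym_bracelet_shape[OF \<alpha>(1) \<open>3 \<le> n\<close> \<open>3 \<le> k\<close> LNM LS]
  have "FirstNonMin \<alpha> \<in> asym_bracelets k n" if "k \<ge> 4"
  proof (rule ccontr)
    assume "FirstNonMin \<alpha> \<notin> asym_bracelets k n"
    then show False by (rule blocked) (use that in simp)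
  qed
  moreover have "(\<exists>\<gamma>. is_palindrome \<gamma> \<and> \<alpha> = [0] @ \<gamma> @ [0, 1, 2])
      \<and> SecondLastNonMax 3 \<alpha> \<in> asym_bracelets 3 n"
    if "k = 3" "FirstNonMin \<alpha> \<notin> asym_bracelets 3 n"
  proof -
    have "FirstNonMin \<alpha> \<notin> asym_bracelets k n" using that by simp
    then obtain P where "\<alpha> = P @ [1, 2]" "is_palindrome P" "\<alpha>!0 = 0" "\<alpha>!1 \<noteq> 2"
      by (rule blocked)
    then show ?thesis using SecondLastNonMax_in_asym_bracelets \<alpha> nk that by simp
  qed
  ultimately show ?thesis by blast
qed

end
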